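(* Assume $r$ is not a codeword of the GRS code (equivalently $\deg R\ge k$). Let $A_{s,\ell}$ be the $(\ell+1)\times(\ell+1)$ matrix over $\mathbb F_q[X]$ whose $t$-th row ($t=0,\dots,\ell$) is the coefficient vector of $P^{(t)}$, where $P^{(t)}=G^{s-t}(Y-R)^t$ for $0\le t<s$ and $P^{(t)}=Y^{t-s}(Y-R)^s$ for $s\le t\le\ell$. Then $\Delta(A_{s,\ell}W_\ell)=\tfrac12(2\ell-s+1)s(\deg R-k+1)\le \ell s(n-k)$.
   Context: Let $\mathbb F_q$ be a finite field, $1\le k<n<q$, $\alpha_0,\dots,\alpha_{n-1}$ distinct nonzero elements of $\mathbb F_q$, $w_0,\dots,w_{n-1}$ nonzero elements of $\mathbb F_q$. The GRS code is $\{(w_0f(\alpha_0),\dots,w_{n-1}f(\alpha_{n-1})): f\in\mathbb F_q[X],\deg f<k\}$. Let $r\in\mathbb F_q^n$, $r_i'=r_i/w_i$, $G(X)=\prod_i(X-\alpha_i)$ and $R(X)$ the unique polynomial of degree $<n$ with $R(\alpha_i)=r_i'$. Let $s\le\ell$ be positive integers. A polynomial $\sum_{t=0}^\ell Q_t(X)Y^t$ has coefficient vector $(Q_0,\dots,Q_\ell)$. $W_\ell=\mathrm{diag}(1,X^{k-1},\dots,X^{\ell(k-1)})$. For a square matrix $V$ over $\mathbb F_q[X]$ with rows $v_i$, $\deg v_i=\max_j\deg v_{i,j}$, $\deg V=\sum_i\deg v_i$ and $\Delta(V)=\deg V-\deg\det V$. *)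

theory Defs
  imports "HOL-Computational_Algebra.Polynomial" "Jordan_Normal_Form.Determinant"
begin

definition GRS_codeword :: "nat \<Rightarrow> nat \<Rightarrow> (nat \<Rightarrow> 'a::field) \<Rightarrow> (nat \<Rightarrow> 'a) \<Rightarrow> (nat \<Rightarrow> 'a) \<Rightarrow> bool" where
  "GRS_codeword n k alpha w c \<longleftrightarrow> (\<exists>f. degree f < k \<and> (\<forall>i<n. c i = w i * poly f (alpha i)))"

definition Gpoly :: "nat \<Rightarrow> (nat \<Rightarrow> 'a::field) \<Rightarrow> 'a poly" where
  "Gpoly n alpha = (\<Prod>i<n. [:- alpha i, 1:])"

text \<open>Bivariate polynomials sum_t Q_t(X) Y^t are elements of type 'a poly poly
  (outer variable Y); the coefficient vector is (coeff P 0, ..., coeff P l).\<close>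
definition Pt :: "nat \<Rightarrow> 'a::field poly \<Rightarrow> 'a poly \<Rightarrow> nat \<Rightarrow> 'a poly poly" where
  "Pt s G R t = (if t < s then smult (G ^ (s - t)) ([:- R, 1:] ^ t)
                 else monom 1 (t - s) * [:- R, 1:] ^ s)"

definition A_mat :: "nat \<Rightarrow> nat \<Rightarrow> 'a::field poly \<Rightarrow> 'a poly \<Rightarrow> 'a poly mat" where
  "A_mat s l G R = mat (l+1) (l+1) (\<lambda>(t,j). coeff (Pt s G R t) j)"

definition W_mat :: "nat \<Rightarrow> nat \<Rightarrow> 'a::field poly mat" where
  "W_mat l k = mat (l+1) (l+1) (\<lambda>(i,j). if i = j then monom 1 (i * (k - 1)) else 0)"

definition row_deg :: "'a::zero poly mat \<Rightarrow> nat \<Rightarrow> nat" where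
  "row_deg V i = Max {degree (V $$ (i,j)) | j. j < dim_col V}"

definition mat_deg :: "'a::zero poly mat \<Rightarrow> nat" where
  "mat_deg V = (\<Sum>i<dim_row V. row_deg V i)"

definition Delta :: "'a::comm_ring_1 poly mat \<Rightarrow> int" where
  "Delta V = int (mat_deg V) - int (degree (det V))"

end

theory Submission
  imports Defs
begin

text \<open>The matrix A W is lower triangular with diagonal entries G^(s-t) X^(t(k-1)) for t < s
  and X^(t(k-1)) otherwise, so Delta is the sum over the rows of row degree minus diagonal
  degree. Because (Y - R)^t is the sum of (t choose j) (-R)^(t-j) Y^j and k - 1 \<le> deg R, the degree
  of row t is attained in column 0 (if t < s) resp. t - s, and it exceeds the diagonal degree
  by exactly min t s * (deg R - k + 1). Summing over t \<le> l gives the formula, and deg R < n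
  gives the bound.\<close>

lemma coeff_linear_power_binomial:
  "coeff ([:a, 1:] ^ n) j = of_nat (n choose j) * a ^ (n - j)"
  for a :: "'a::comm_semiring_1"
proof -
  have "[:a, 1:] ^ n = (monom 1 1 + [:a:]) ^ n"
    by (simp add: monom_altdef)
  also have "\<dots> = (\<Sum>i\<le>n. monom (of_nat (n choose i) * a ^ (n - i)) i)"
    unfolding binomial_ring
    by (intro sum.cong refl)
      (simp add: monom_power poly_const_pow of_nat_poly mult.commute mult.left_commute smult_monom
        flip: monom_altdef)
  finally show ?thesis
    by (simp add: coeff_sum binomial_eq_0)
qed

lemma degree_coeff_linear_power_le:
  "degree (coeff ([:a, 1:] ^ n) j) \<le> (n - j) * degree a"
  for a :: "'a::comm_semiring_1 poly"
proof -
  have "degree (coeff ([:a, 1:] ^ n) j) \<le> degree (a ^ (n - j))"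
    using degree_smult_le[of "of_nat (n choose j)" "a ^ (n - j)"]
    by (simp add: coeff_linear_power_binomial of_nat_poly)
  also have "\<dots> \<le> (n - j) * degree a"
    by (simp add: degree_power_le mult.commute)
  finally show ?thesis .
qed

lemma degree_coeff_linear_power_weighted_le:
  fixes a :: "'a::comm_semiring_1 poly"
  assumes "e \<le> degree a"
  shows "degree (coeff ([:a, 1:] ^ n) j * monom 1 (j * e)) \<le> n * degree a"
proof (cases "j \<le> n")
  case True
  have "degree (coeff ([:a, 1:] ^ n) j * monom 1 (j * e)) \<le> (n - j) * degree a + j * e"
    using degree_mult_le[of "coeff ([:a, 1:] ^ n) j" "monom 1 (j * e)"]
      degree_coeff_linear_power_le[of a n j] degree_monom_le[of 1 "j * e"]
    by (meson add_mono order_trans)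
  also have "\<dots> \<le> (n - j) * degree a + j * degree a"
    using assms by simp
  also have "\<dots> = n * degree a"
    using True by (simp flip: add_mult_distrib)
  finally show ?thesis .
qed (simp add: coeff_linear_power_binomial binomial_eq_0)

lemma coeff_linear_power_0: "coeff ([:a, 1:] ^ n) 0 = a ^ n"
  for a :: "'a::comm_semiring_1 poly"
  by (simp add: coeff_linear_power_binomial)

text \<open>Degree of row t of A W for deg G = m, deg R = d and column j scaled by X^(j e).\<close>
definition Pt_row_deg :: "nat \<Rightarrow> nat \<Rightarrow> nat \<Rightarrow> nat \<Rightarrow> nat \<Rightarrow> nat" where
  "Pt_row_deg s m d e t = (if t < s then (s - t) * m + t * d else s * d + (t - s) * e)"

lemma degree_coeff_Pt_weighted_le:
  fixes G R :: "'a::field poly"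
  assumes "e \<le> degree R"
  shows "degree (coeff (Pt s G R t) j * monom 1 (j * e)) \<le> Pt_row_deg s (degree G) (degree R) e t"
proof (cases "t < s")
  case True
  have "degree (coeff (Pt s G R t) j * monom 1 (j * e))
      = degree (G ^ (s - t) * (coeff ([:-R, 1:] ^ t) j * monom 1 (j * e)))"
    using True by (simp add: Pt_def mult.assoc)
  also have "\<dots> \<le> degree (G ^ (s - t)) + degree (coeff ([:-R, 1:] ^ t) j * monom 1 (j * e))"
    by (rule degree_mult_le)
  also have "\<dots> \<le> (s - t) * degree G + t * degree R"
    using degree_coeff_linear_power_weighted_le[of e "-R" t j] assms degree_power_le[of G "s - t"]
    by (simp add: add_mono mult.commute)
  finally show ?thesis
    using True by (simp add: Pt_row_deg_def)
next
  case False
  show ?thesis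
  proof (cases "j < t - s")
    case True
    with False show ?thesis
      by (simp add: Pt_def coeff_monom_mult)
  next
    case j_ge: False
    define i where "i = j - (t - s)"
    have "coeff (Pt s G R t) j * monom 1 (j * e)
        = coeff ([:-R, 1:] ^ s) i * monom 1 (i * e) * monom 1 ((t - s) * e)"
      using False j_ge
      by (simp add: Pt_def coeff_monom_mult i_def mult_monom mult.assoc flip: add_mult_distrib)
    moreover have "degree (coeff ([:-R, 1:] ^ s) i * monom 1 (i * e)) \<le> s * degree R"
      using degree_coeff_linear_power_weighted_le[of e "-R" s i] assms by simp
    ultimately have "degree (coeff (Pt s G R t) j * monom 1 (j * e)) \<le> s * degree R + (t - s) * e"
      using order.trans[OF degree_mult_le add_mono[OF _ degree_monom_le]] by metis
    then show ?thesis
      using False by (simp add: Pt_row_deg_def)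
  qed
qed

lemma degree_coeff_Pt_weighted_leading:
  fixes G R :: "'a::field poly"
  assumes "G \<noteq> 0" "R \<noteq> 0"
  shows "degree (coeff (Pt s G R t) (if t < s then 0 else t - s)
                  * monom 1 ((if t < s then 0 else t - s) * e))
       = Pt_row_deg s (degree G) (degree R) e t"
  using assms
  by (simp add: Pt_def Pt_row_deg_def coeff_monom_mult coeff_linear_power_0 degree_mult_eq
      degree_power_eq degree_monom_eq)

lemma coeff_Pt_diagonal:
  fixes G R :: "'a::field poly"
  shows "coeff (Pt s G R t) t = (if t < s then G ^ (s - t) else 1)"
  by (cases "t < s") (simp_all add: Pt_def coeff_monom_mult coeff_linear_power)

lemma coeff_Pt_above_diagonal:
  fixes G R :: "'a::field poly"
  shows "t < j \<Longrightarrow> coeff (Pt s G R t) j = 0"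
  by (cases "t < s") (auto simp add: Pt_def coeff_monom_mult coeff_linear_power_binomial binomial_eq_0)

lemma Pt_row_deg_eq_diagonal_plus:
  assumes "e \<le> d"
  shows "Pt_row_deg s m d e t = (if t < s then (s - t) * m else 0) + t * e + min t s * (d - e)"
proof (cases "t < s")
  case True
  then show ?thesis
    using assms by (simp add: Pt_row_deg_def flip: add_mult_distrib2)
next
  case False
  then have "t * e = (t - s) * e + s * e"
    by (simp flip: add_mult_distrib)
  with False assms show ?thesis
    by (simp add: Pt_row_deg_def flip: add_mult_distrib2)
qed

lemma double_sum_min_atMost:
  "s \<le> l \<Longrightarrow> 2 * (\<Sum>t\<le>l. min t s) = (2 * l - s + 1) * s" for s l :: nat
proof (induction l)
  case (Suc l)
  show ?case
  proof (cases "s \<le> l")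
    case True
    have "2 * Suc l - s + 1 = (2 * l - s + 1) + 2"
      using True by simp
    with Suc True show ?thesis
      by (simp add: distrib_right)
  next
    case False
    with Suc.prems have "s = Suc l" by simp
    then show ?thesis
      using double_gauss_sum[of "Suc l", where 'a = nat] by (simp add: atLeast0AtMost)
  qed
qed simp

lemma index_mult_W_mat:
  assumes "A \<in> carrier_mat (l + 1) (l + 1)" "i \<le> l" "j \<le> l"
  shows "(A * W_mat l k) $$ (i, j) = A $$ (i, j) * monom 1 (j * (k - 1))"
proof -
  have "(A * W_mat l k) $$ (i, j)
      = (\<Sum>m\<in>{0..<l + 1}. A $$ (i, m) * (if m = j then monom 1 (m * (k - 1)) else 0))"
    using assms by (simp add: W_mat_def scalar_prod_def)
  also have "\<dots> = A $$ (i, j) * monom 1 (j * (k - 1))"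
    using assms(3) by (simp add: if_distrib[of "(*) _"] cong: if_cong)
  finally show ?thesis .
qed

lemma row_deg_eqI:
  assumes "j < dim_col V" "degree (V $$ (i, j)) = b"
    and "\<And>m. m < dim_col V \<Longrightarrow> degree (V $$ (i, m)) \<le> b"
  shows "row_deg V i = b"
  unfolding row_deg_def by (rule Max_eqI) (use assms in auto)

lemma Delta_lower_triangular:
  fixes M :: "'a::idom poly mat"
  assumes M: "M \<in> carrier_mat n n"
    and upper_zero: "\<And>i j. i < j \<Longrightarrow> j < n \<Longrightarrow> M $$ (i, j) = 0"
    and diag_nonzero: "\<And>i. i < n \<Longrightarrow> M $$ (i, i) \<noteq> 0"
  shows "Delta M = (\<Sum>i<n. int (row_deg M i) - int (degree (M $$ (i, i))))"
proof -
  have "det M = (\<Prod>i<n. M $$ (i, i))"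
    using det_lower_triangular[OF upper_zero M] M by (simp add: prod_list_diag_prod atLeast0LessThan)
  then have "degree (det M) = (\<Sum>i<n. degree (M $$ (i, i)))"
    using diag_nonzero by (simp add: degree_prod_eq_sum_degree)
  then show ?thesis
    using M by (simp add: Delta_def mat_deg_def sum_subtractf)
qed

lemma Delta_A_mat_W_mat:
  fixes G R :: "'a::field poly"
  assumes "G \<noteq> 0" "R \<noteq> 0" "k - 1 \<le> degree R"
  shows "Delta (A_mat s l G R * W_mat l k) = int ((degree R - (k - 1)) * (\<Sum>t\<le>l. min t s))"
proof -
  define M where "M = A_mat s l G R * W_mat l k"
  have A: "A_mat s l G R \<in> carrier_mat (l + 1) (l + 1)"
    by (simp add: A_mat_def)
  then have M: "M \<in> carrier_mat (l + 1) (l + 1)"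
    by (simp add: M_def W_mat_def)
  have entry: "M $$ (t, j) = coeff (Pt s G R t) j * monom 1 (j * (k - 1))"
    if "t \<le> l" "j \<le> l" for t j
    using index_mult_W_mat[OF A that] that by (simp add: M_def A_mat_def)
  have row_deg: "row_deg M t = Pt_row_deg s (degree G) (degree R) (k - 1) t" if "t \<le> l" for t
    using M that entry degree_coeff_Pt_weighted_leading[OF assms(1,2), of s t "k - 1"]
      degree_coeff_Pt_weighted_le[OF assms(3), of s G t]
    by (intro row_deg_eqI[where j = "if t < s then 0 else t - s"]) auto
  have diagonal: "M $$ (t, t) = (if t < s then G ^ (s - t) else 1) * monom 1 (t * (k - 1))"
    if "t \<le> l" for t
    using entry[OF that that] by (simp add: coeff_Pt_diagonal)
  have "Delta M = (\<Sum>t<l + 1. int (row_deg M t) - int (degree (M $$ (t, t))))"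
    using M assms(1) entry diagonal coeff_Pt_above_diagonal
    by (intro Delta_lower_triangular) auto
  also have "\<dots> = (\<Sum>t\<le>l. int (min t s * (degree R - (k - 1))))"
    using assms row_deg diagonal Pt_row_deg_eq_diagonal_plus
    by (intro sum.cong) (auto simp: degree_mult_eq degree_monom_eq degree_power_eq)
  finally show ?thesis
    by (simp add: M_def sum_distrib_left mult.commute)
qed

lemma Gpoly_nonzero: "Gpoly n alpha \<noteq> 0"
  by (simp add: Gpoly_def)

lemma degree_ge_if_not_GRS_codeword:
  assumes "\<forall>i<n. w i \<noteq> 0" "\<forall>i<n. poly R (alpha i) = r i / w i"
    and "\<not> GRS_codeword n k alpha w r"
  shows "k \<le> degree R"
proof (rule ccontr)
  assume "\<not> k \<le> degree R"
  moreover have "\<forall>i<n. r i = w i * poly R (alpha i)"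
    using assms(1,2) by simp
  ultimately have "GRS_codeword n k alpha w r"
    unfolding GRS_codeword_def by (metis not_le)
  with assms(3) show False ..
qed

theorem lemma6:
  fixes alpha w r :: "nat \<Rightarrow> 'a::{finite,field}"
    and R :: "'a poly"
    and n k s l :: nat
  assumes "1 \<le> k" "k < n" "n < card (UNIV :: 'a set)"
    and "inj_on alpha {..<n}" "\<forall>i<n. alpha i \<noteq> 0" "\<forall>i<n. w i \<noteq> 0"
    and "degree R < n" "\<forall>i<n. poly R (alpha i) = r i / w i"
    and "0 < s" "s \<le> l"
    and "\<not> GRS_codeword n k alpha w r"
  shows "real_of_int (Delta (A_mat s l (Gpoly n alpha) R * W_mat l k))
           = real ((2*l - s + 1) * s * (degree R - k + 1)) / 2
       \<and> real_of_int (Delta (A_mat s l (Gpoly n alpha) R * W_mat l k)) \<le> real (l * s * (n - k))"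
proof -
  define S where "S = (\<Sum>t\<le>l. min t s)"
  define c where "c = degree R - k + 1"
  have k_le: "k \<le> degree R"
    using degree_ge_if_not_GRS_codeword assms(6,8,11) .
  with assms(1) have "R \<noteq> 0"
    by auto
  then have "Delta (A_mat s l (Gpoly n alpha) R * W_mat l k) = int ((degree R - (k - 1)) * S)"
    unfolding S_def by (rule Delta_A_mat_W_mat[OF Gpoly_nonzero]) (use k_le in simp)
  also have "degree R - (k - 1) = c"
    using k_le assms(1) by (simp add: c_def)
  finally have Delta: "real_of_int (Delta (A_mat s l (Gpoly n alpha) R * W_mat l k)) = real (c * S)"
    by simp
  have S: "2 * S = (2 * l - s + 1) * s"
    unfolding S_def using assms(10) by (rule double_sum_min_atMost)
  then have half: "real (c * S) = real ((2 * l - s + 1) * s * c) / 2"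
    unfolding S[symmetric] by simp
  have "2 * l - s + 1 \<le> 2 * l"
    using assms(9,10) by arith
  then have "2 * S \<le> 2 * l * s"
    unfolding S by (rule mult_le_mono1)
  then have "S \<le> l * s"
    by simp
  moreover have "c \<le> n - k"
    using assms(7) k_le by (simp add: c_def)
  ultimately have "c * S \<le> l * s * (n - k)"
    using mult_le_mono by (metis mult.commute)
  then have "real (c * S) \<le> real (l * s * (n - k))"
    by (simp only: of_nat_le_iff)
  with Delta half show ?thesis
    unfolding c_def by argo
qed

end
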